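(* Let $P,Q_0,Q_1$ be probability measures with $Q_1\perp P$, and let $0\le\epsilon\le1$. Then $$H^2(P,(1-\epsilon)Q_0+\epsilon Q_1)=2(1-\sqrt{1-\epsilon})+\sqrt{1-\epsilon}\,H^2(P,Q_0),$$ and $$\frac14\le\frac{H^2(P,(1-\epsilon)Q_0+\epsilon Q_1)}{\epsilon\vee H^2(P,Q_0)}\le4.$$
   Context: $H^2(P,Q)=\int(\sqrt{dP}-\sqrt{dQ})^2$ is the squared Hellinger distance. $Q_1\perp P$ means there is a measurable set $A$ with $Q_1(A)=1$ and $P(A)=0$. $a\vee b=\max(a,b)$. *)

theory Defs
  imports "HOL-Probability.Probability"
begin

definition mix_measure :: "ennreal \<Rightarrow> 'a measure \<Rightarrow> ennreal \<Rightarrow> 'a measure \<Rightarrow> 'a measure" where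
  "mix_measure a M b N =
     measure_of (space M) (sets M) (\<lambda>A. a * emeasure M A + b * emeasure N A)"

text \<open>Squared Hellinger distance  H^2(P,Q) = \<integral> (sqrt dP - sqrt dQ)^2, computed
  with respect to the dominating measure P + Q, densities given by Radon-Nikodym derivatives.\<close>
definition hellinger_sq :: "'a measure \<Rightarrow> 'a measure \<Rightarrow> real" where
  "hellinger_sq P Q =
     (let \<nu> = mix_measure 1 P 1 Q in
      enn2real (\<integral>\<^sup>+ x. ennreal ((sqrt (enn2real (RN_deriv \<nu> P x))
                                   - sqrt (enn2real (RN_deriv \<nu> Q x)))\<^sup>2) \<partial>\<nu>))"

end

theory Submission
  imports Defs
begin

text \<open>Represent P, Q0, Q1 by real densities p, q0, q1 with respect to the finite measure
  P + (Q0 + Q1). Singularity of Q1 and P means p * q1 = 0 almost everywhere, so wherever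
  p > 0 the mixture density is m = (1-\<epsilon>) q0, and with s = sqrt (1-\<epsilon>) one has pointwise
  (sqrt p - sqrt m)^2 = (1-s) p + m - s q0 + s (sqrt p - sqrt q0)^2; where p = 0 this is trivial.
  Integrating gives the identity. The two-sided bound then follows from
  1 - s \<le> \<epsilon> \<le> 2 (1 - s) and 0 \<le> H^2(P,Q0) \<le> 2.\<close>

lemma sets_mix_measure [simp]: "sets (mix_measure a M b N) = sets M"
  unfolding mix_measure_def by (simp add: sets.space_closed)

lemma space_mix_measure [simp]: "space (mix_measure a M b N) = space M"
  unfolding mix_measure_def by (simp add: sets.space_closed)

lemma emeasure_mix_measure:
  assumes "sets N = sets M" "A \<in> sets M"
  shows "emeasure (mix_measure a M b N) A = a * emeasure M A + b * emeasure N A"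
  unfolding mix_measure_def
proof (rule emeasure_measure_of_sigma)
  show "sigma_algebra (space M) (sets M)" ..
  show "positive (sets M) (\<lambda>A. a * emeasure M A + b * emeasure N A)"
    by (simp add: positive_def)
  show "countably_additive (sets M) (\<lambda>A. a * emeasure M A + b * emeasure N A)"
    unfolding countably_additive_def
  proof (intro allI impI)
    fix F :: "nat \<Rightarrow> 'a set"
    assume F: "range F \<subseteq> sets M" "disjoint_family F"
    then have "range F \<subseteq> sets N" using assms by simp
    then show "(\<Sum>i. a * emeasure M (F i) + b * emeasure N (F i))
             = a * emeasure M (\<Union> (range F)) + b * emeasure N (\<Union> (range F))"
      using suminf_emeasure[OF F] suminf_emeasure[OF _ F(2)]
      by (simp add: suminf_add[symmetric])
  qed
qed (fact assms)

lemma mix_measure_density: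
  assumes [measurable]: "f \<in> borel_measurable \<mu>" "g \<in> borel_measurable \<mu>"
  shows "mix_measure a (density \<mu> f) b (density \<mu> g) = density \<mu> (\<lambda>x. a * f x + b * g x)"
  by (rule measure_eqI)
     (simp_all add: emeasure_mix_measure emeasure_density nn_integral_add nn_integral_cmult
        distrib_right mult.assoc)

lemma mix_measure_density_real:
  fixes f g :: "'a \<Rightarrow> real"
  assumes [measurable]: "f \<in> borel_measurable \<mu>" "g \<in> borel_measurable \<mu>"
    and "\<And>x. 0 \<le> f x" "\<And>x. 0 \<le> g x" "0 \<le> a" "0 \<le> b"
  shows "mix_measure (ennreal a) (density \<mu> (\<lambda>x. ennreal (f x))) (ennreal b) (density \<mu> (\<lambda>x. ennreal (g x)))
       = density \<mu> (\<lambda>x. ennreal (a * f x + b * g x))"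
  using assms by (simp add: mix_measure_density ennreal_plus ennreal_mult)

lemma finite_measure_mix_measure:
  assumes "finite_measure M" "finite_measure N" "sets N = sets M"
  shows "finite_measure (mix_measure 1 M 1 N)"
proof (rule finite_measureI)
  have "space N = space M" using assms(3) by (rule sets_eq_imp_space_eq)
  then show "emeasure (mix_measure 1 M 1 N) (space (mix_measure 1 M 1 N)) \<noteq> \<infinity>"
    using assms by (simp add: emeasure_mix_measure finite_measure.emeasure_finite)
qed

lemma absolutely_continuous_mix_measure:
  assumes "sets N = sets M"
  shows "absolutely_continuous (mix_measure 1 M 1 N) M"
    and "absolutely_continuous (mix_measure 1 M 1 N) N"
  using assms by (auto simp: absolutely_continuous_def null_sets_def emeasure_mix_measure)

lemma prob_space_real_density:
  assumes "finite_measure \<mu>" "prob_space P" "sets P = sets \<mu>" "absolutely_continuous \<mu> P"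
  obtains p where "p \<in> borel_measurable \<mu>" "\<And>x. 0 \<le> p x" "integrable \<mu> p"
    "integral\<^sup>L \<mu> p = 1" "P = density \<mu> (\<lambda>x. ennreal (p x))"
proof -
  interpret finite_measure \<mu> by fact
  interpret P: prob_space P by fact
  define p where "p x = enn2real (RN_deriv \<mu> P x)" for x
  have p_meas [measurable]: "p \<in> borel_measurable \<mu>" unfolding p_def by measurable
  have p_nonneg: "\<And>x. 0 \<le> p x" by (simp add: p_def)
  have "AE x in \<mu>. RN_deriv \<mu> P x \<noteq> \<infinity>"
    using assms by (intro RN_deriv_finite) (auto simp: P.sigma_finite_measure_axioms)
  then have "density \<mu> (RN_deriv \<mu> P) = density \<mu> (\<lambda>x. ennreal (p x))"
    by (intro density_cong) (auto elim!: AE_mp simp: p_def ennreal_enn2real_if)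
  then have P_eq: "P = density \<mu> (\<lambda>x. ennreal (p x))"
    using density_RN_deriv[OF assms(4,3)] by simp
  have "(\<integral>\<^sup>+ x. ennreal (p x) \<partial>\<mu>) = emeasure (density \<mu> (\<lambda>x. ennreal (p x))) (space \<mu>)"
    by (subst emeasure_density) (auto intro!: nn_integral_cong)
  also have "\<dots> = 1"
    using P.emeasure_space_1 sets_eq_imp_space_eq[OF assms(3)] P_eq by simp
  finally have nn_integral_p: "(\<integral>\<^sup>+ x. ennreal (p x) \<partial>\<mu>) = 1" .
  have "integrable \<mu> p"
    by (rule integrableI_nonneg) (simp_all add: nn_integral_p p_nonneg)
  moreover have "integral\<^sup>L \<mu> p = 1"
    by (subst integral_eq_nn_integral) (simp_all add: nn_integral_p p_nonneg)
  ultimately show ?thesis using that p_meas p_nonneg P_eq by blast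
qed

lemma prob_spaces_common_real_densities:
  assumes "prob_space P" "prob_space Q0" "prob_space Q1" "sets Q0 = sets P" "sets Q1 = sets P"
  obtains \<mu> p q0 q1 where "sets \<mu> = sets P"
    "p \<in> borel_measurable \<mu>" "\<And>x. 0 \<le> p x" "integrable \<mu> p" "integral\<^sup>L \<mu> p = 1"
    "P = density \<mu> (\<lambda>x. ennreal (p x))"
    "q0 \<in> borel_measurable \<mu>" "\<And>x. 0 \<le> q0 x" "integrable \<mu> q0" "integral\<^sup>L \<mu> q0 = 1"
    "Q0 = density \<mu> (\<lambda>x. ennreal (q0 x))"
    "q1 \<in> borel_measurable \<mu>" "\<And>x. 0 \<le> q1 x" "integrable \<mu> q1" "integral\<^sup>L \<mu> q1 = 1"
    "Q1 = density \<mu> (\<lambda>x. ennreal (q1 x))"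
proof -
  define Q where "Q = mix_measure 1 Q0 1 Q1"
  define \<mu> where "\<mu> = mix_measure 1 P 1 Q"
  have sets: "sets \<mu> = sets P" "sets Q = sets P" using assms by (simp_all add: \<mu>_def Q_def)
  have "finite_measure \<mu>"
    unfolding \<mu>_def Q_def using assms
    by (intro finite_measure_mix_measure) (simp_all add: prob_space_def)
  moreover have "absolutely_continuous \<mu> P" "absolutely_continuous \<mu> Q0" "absolutely_continuous \<mu> Q1"
    using absolutely_continuous_mix_measure[of Q P] absolutely_continuous_mix_measure[of Q1 Q0]
      sets assms
    by (auto simp: \<mu>_def Q_def absolutely_continuous_def)
  ultimately show ?thesis
    using prob_space_real_density[of \<mu> P] prob_space_real_density[of \<mu> Q0]
      prob_space_real_density[of \<mu> Q1] that assms sets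
    by metis
qed

lemma AE_density_zero_on_null_set:
  fixes f :: "'a \<Rightarrow> real"
  assumes [measurable]: "f \<in> borel_measurable \<mu>" "A \<in> sets \<mu>" and "\<And>x. 0 \<le> f x"
    and "emeasure (density \<mu> (\<lambda>x. ennreal (f x))) A = 0"
  shows "AE x in \<mu>. x \<in> A \<longrightarrow> f x = 0"
proof -
  have "(\<integral>\<^sup>+ x. ennreal (f x) * indicator A x \<partial>\<mu>) = 0"
    using assms by (simp add: emeasure_density)
  then have "AE x in \<mu>. ennreal (f x) * indicator A x = 0"
    by (simp add: nn_integral_0_iff_AE)
  then show ?thesis by eventually_elim (auto simp: assms)
qed

lemma AE_singular_densities:
  fixes p q :: "'a \<Rightarrow> real"
  assumes [measurable]: "p \<in> borel_measurable \<mu>" "q \<in> borel_measurable \<mu>" "A \<in> sets \<mu>"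
    and "\<And>x. 0 \<le> p x" "\<And>x. 0 \<le> q x"
    and "emeasure (density \<mu> (\<lambda>x. ennreal (p x))) A = 0"
    and "emeasure (density \<mu> (\<lambda>x. ennreal (q x))) (space \<mu> - A) = 0"
  shows "AE x in \<mu>. p x = 0 \<or> q x = 0"
proof -
  have "AE x in \<mu>. x \<in> A \<longrightarrow> p x = 0"
    by (rule AE_density_zero_on_null_set) (use assms in auto)
  moreover have "AE x in \<mu>. x \<in> space \<mu> - A \<longrightarrow> q x = 0"
    by (rule AE_density_zero_on_null_set) (use assms in auto)
  moreover note AE_space
  ultimately show ?thesis by eventually_elim auto
qed

lemma sqrt_diff_sq_le_add:
  fixes a b :: real
  assumes "0 \<le> a" "0 \<le> b"
  shows "(sqrt a - sqrt b)\<^sup>2 \<le> a + b"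
  using assms by (simp add: power2_diff)

lemma hellinger_integrand_rescale:
  fixes p q :: real
  assumes "0 \<le> p" "0 \<le> q"
  shows "(p + q) * (sqrt (p / (p + q)) - sqrt (q / (p + q)))\<^sup>2 = (sqrt p - sqrt q)\<^sup>2"
proof (cases "p + q = 0")
  case True
  then show ?thesis using assms by simp
next
  case False
  then have "p + q > 0" using assms by simp
  then show ?thesis
    by (simp add: real_sqrt_divide diff_divide_distrib[symmetric] power_divide)
qed

lemma AE_RN_deriv_density_real:
  fixes f w :: "'a \<Rightarrow> real"
  assumes [measurable]: "f \<in> borel_measurable \<mu>" "w \<in> borel_measurable \<mu>"
    and "\<And>x. 0 \<le> f x" "\<And>x. f x \<le> w x" "integrable \<mu> w"
  shows "AE x in density \<mu> (\<lambda>x. ennreal (w x)).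
           enn2real (RN_deriv (density \<mu> (\<lambda>x. ennreal (w x))) (density \<mu> (\<lambda>x. ennreal (f x))) x)
           = f x / w x"
proof -
  define \<nu> where "\<nu> = density \<mu> (\<lambda>x. ennreal (w x))"
  have w_nonneg: "\<And>x. 0 \<le> w x" using assms(3,4) order_trans by blast
  then have "emeasure \<nu> (space \<nu>) \<noteq> \<infinity>"
    using assms by (simp add: \<nu>_def emeasure_density integrable_iff_bounded)
  then interpret \<nu>: finite_measure \<nu> by (rule finite_measureI)
  have "density \<nu> (\<lambda>x. ennreal (f x / w x)) = density \<mu> (\<lambda>x. ennreal (f x))"
    unfolding \<nu>_def
  proof (subst density_density_eq)
    have "ennreal (w x) * ennreal (f x / w x) = ennreal (f x)" for x
    proof -
      have "w x * (f x / w x) = f x" using assms(3,4)[of x] by (cases "w x = 0") auto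
      then show ?thesis using assms(3) w_nonneg by (simp add: ennreal_mult[symmetric])
    qed
    then show "density \<mu> (\<lambda>x. ennreal (w x) * ennreal (f x / w x)) = density \<mu> (\<lambda>x. ennreal (f x))"
      by simp
  qed auto
  from \<nu>.RN_deriv_unique[OF _ this]
  have "AE x in \<nu>. ennreal (f x / w x) = RN_deriv \<nu> (density \<mu> (\<lambda>x. ennreal (f x))) x"
    by (simp add: \<nu>_def)
  then show ?thesis
    unfolding \<nu>_def[symmetric]
    by eventually_elim (metis assms(3,4) divide_nonneg_nonneg enn2real_ennreal order_trans)
qed

lemma hellinger_sq_density:
  fixes p q :: "'a \<Rightarrow> real"
  assumes [measurable]: "p \<in> borel_measurable \<mu>" "q \<in> borel_measurable \<mu>"
    and p_nonneg: "\<And>x. 0 \<le> p x" and q_nonneg: "\<And>x. 0 \<le> q x"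
    and "integrable \<mu> p" "integrable \<mu> q"
  shows "hellinger_sq (density \<mu> (\<lambda>x. ennreal (p x))) (density \<mu> (\<lambda>x. ennreal (q x)))
       = (\<integral>x. (sqrt (p x) - sqrt (q x))\<^sup>2 \<partial>\<mu>)"
proof -
  let ?P = "density \<mu> (\<lambda>x. ennreal (p x))" and ?Q = "density \<mu> (\<lambda>x. ennreal (q x))"
  define \<nu> where "\<nu> = density \<mu> (\<lambda>x. ennreal (p x + q x))"
  have mix: "mix_measure 1 ?P 1 ?Q = \<nu>"
    using mix_measure_density_real[of p \<mu> q 1 1] assms by (simp add: \<nu>_def)
  have integrable_sum: "integrable \<mu> (\<lambda>x. p x + q x)" using assms by simp
  have "AE x in \<nu>. enn2real (RN_deriv \<nu> ?P x) = p x / (p x + q x)"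
    unfolding \<nu>_def using integrable_sum p_nonneg q_nonneg
    by (intro AE_RN_deriv_density_real) (auto simp: add_increasing2)
  moreover have "AE x in \<nu>. enn2real (RN_deriv \<nu> ?Q x) = q x / (p x + q x)"
    unfolding \<nu>_def using integrable_sum p_nonneg q_nonneg
    by (intro AE_RN_deriv_density_real) (auto simp: add_increasing)
  ultimately have "AE x in \<nu>.
      ennreal ((sqrt (enn2real (RN_deriv \<nu> ?P x)) - sqrt (enn2real (RN_deriv \<nu> ?Q x)))\<^sup>2)
      = ennreal ((sqrt (p x / (p x + q x)) - sqrt (q x / (p x + q x)))\<^sup>2)"
    by eventually_elim simp
  then have "hellinger_sq ?P ?Q
      = enn2real (\<integral>\<^sup>+ x. ennreal ((sqrt (p x / (p x + q x)) - sqrt (q x / (p x + q x)))\<^sup>2) \<partial>\<nu>)"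
    unfolding hellinger_sq_def Let_def mix by (simp only: nn_integral_cong_AE)
  also have "\<dots> = enn2real (\<integral>\<^sup>+ x. ennreal (p x + q x)
      * ennreal ((sqrt (p x / (p x + q x)) - sqrt (q x / (p x + q x)))\<^sup>2) \<partial>\<mu>)"
    unfolding \<nu>_def by (subst nn_integral_density) auto
  also have "\<dots> = enn2real (\<integral>\<^sup>+ x. ennreal ((sqrt (p x) - sqrt (q x))\<^sup>2) \<partial>\<mu>)"
    by (intro arg_cong[where f = enn2real] nn_integral_cong, subst ennreal_mult[symmetric])
       (use p_nonneg q_nonneg hellinger_integrand_rescale in auto)
  also have "\<dots> = (\<integral>x. (sqrt (p x) - sqrt (q x))\<^sup>2 \<partial>\<mu>)"
    by (rule enn2real_nn_integral_eq_integral) auto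
  finally show ?thesis .
qed

lemma integrable_sqrt_diff_sq:
  fixes p q :: "'a \<Rightarrow> real"
  assumes [measurable]: "p \<in> borel_measurable \<mu>" "q \<in> borel_measurable \<mu>"
    and "\<And>x. 0 \<le> p x" "\<And>x. 0 \<le> q x" "integrable \<mu> p" "integrable \<mu> q"
  shows "integrable \<mu> (\<lambda>x. (sqrt (p x) - sqrt (q x))\<^sup>2)"
  by (rule Bochner_Integration.integrable_bound[of _ "\<lambda>x. p x + q x"])
     (use assms sqrt_diff_sq_le_add in auto)

lemma hellinger_sq_density_le:
  fixes p q :: "'a \<Rightarrow> real"
  assumes [measurable]: "p \<in> borel_measurable \<mu>" "q \<in> borel_measurable \<mu>"
    and "\<And>x. 0 \<le> p x" "\<And>x. 0 \<le> q x" "integrable \<mu> p" "integrable \<mu> q"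
  shows "hellinger_sq (density \<mu> (\<lambda>x. ennreal (p x))) (density \<mu> (\<lambda>x. ennreal (q x)))
       \<le> integral\<^sup>L \<mu> p + integral\<^sup>L \<mu> q"
proof -
  have "(\<integral>x. (sqrt (p x) - sqrt (q x))\<^sup>2 \<partial>\<mu>) \<le> (\<integral>x. p x + q x \<partial>\<mu>)"
    using assms sqrt_diff_sq_le_add integrable_sqrt_diff_sq[OF assms]
    by (intro integral_mono) auto
  then show ?thesis using assms by (simp add: hellinger_sq_density)
qed

lemma sqrt_diff_sq_contamination:
  fixes p q0 q1 \<epsilon> :: real
  assumes "0 \<le> p" "0 \<le> q0" "0 \<le> q1" "0 \<le> \<epsilon>" "\<epsilon> \<le> 1" "p = 0 \<or> q1 = 0"
  defines "m \<equiv> (1 - \<epsilon>) * q0 + \<epsilon> * q1" and "s \<equiv> sqrt (1 - \<epsilon>)"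
  shows "(sqrt p - sqrt m)\<^sup>2 = (1 - s) * p + m - s * q0 + s * (sqrt p - sqrt q0)\<^sup>2"
proof (cases "p = 0")
  case True
  have "0 \<le> m" using assms by (simp add: m_def)
  then show ?thesis using True assms by simp
next
  case False
  then have "q1 = 0" using assms by simp
  then have m: "m = s\<^sup>2 * (sqrt q0)\<^sup>2" "sqrt m = s * sqrt q0"
    using assms by (simp_all add: m_def s_def real_sqrt_mult)
  have "(sqrt p - s * sqrt q0)\<^sup>2
      = (1 - s) * (sqrt p)\<^sup>2 + s\<^sup>2 * (sqrt q0)\<^sup>2 - s * (sqrt q0)\<^sup>2 + s * (sqrt p - sqrt q0)\<^sup>2"
    by (simp add: algebra_simps power2_eq_square)
  then show ?thesis using assms m by simp
qed

lemma hellinger_sq_density_contamination: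
  fixes p q0 q1 :: "'a \<Rightarrow> real" and \<epsilon> :: real
  assumes [measurable]: "p \<in> borel_measurable \<mu>" "q0 \<in> borel_measurable \<mu>" "q1 \<in> borel_measurable \<mu>"
    and "\<And>x. 0 \<le> p x" "\<And>x. 0 \<le> q0 x" "\<And>x. 0 \<le> q1 x"
    and "integrable \<mu> p" "integrable \<mu> q0" "integrable \<mu> q1"
    and "integral\<^sup>L \<mu> p = 1" "integral\<^sup>L \<mu> q0 = 1" "integral\<^sup>L \<mu> q1 = 1"
    and singular: "AE x in \<mu>. p x = 0 \<or> q1 x = 0"
    and "0 \<le> \<epsilon>" "\<epsilon> \<le> 1"
  shows "hellinger_sq (density \<mu> (\<lambda>x. ennreal (p x)))
           (density \<mu> (\<lambda>x. ennreal ((1 - \<epsilon>) * q0 x + \<epsilon> * q1 x)))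
       = 2 * (1 - sqrt (1 - \<epsilon>))
         + sqrt (1 - \<epsilon>) * hellinger_sq (density \<mu> (\<lambda>x. ennreal (p x))) (density \<mu> (\<lambda>x. ennreal (q0 x)))"
proof -
  define s where "s = sqrt (1 - \<epsilon>)"
  define m where "m x = (1 - \<epsilon>) * q0 x + \<epsilon> * q1 x" for x
  have m_meas [measurable]: "m \<in> borel_measurable \<mu>" unfolding m_def[abs_def] by measurable
  have m_nonneg: "\<And>x. 0 \<le> m x" using assms by (simp add: m_def)
  have m_integrable: "integrable \<mu> m" and m_integral: "integral\<^sup>L \<mu> m = 1"
    using assms by (simp_all add: m_def[abs_def])
  have "AE x in \<mu>. (sqrt (p x) - sqrt (m x))\<^sup>2
      = (1 - s) * p x + m x - s * q0 x + s * (sqrt (p x) - sqrt (q0 x))\<^sup>2"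
    using singular
  proof eventually_elim
    case (elim x)
    show ?case unfolding m_def s_def by (rule sqrt_diff_sq_contamination) (use assms elim in auto)
  qed
  then have "(\<integral>x. (sqrt (p x) - sqrt (m x))\<^sup>2 \<partial>\<mu>)
      = (\<integral>x. (1 - s) * p x + m x - s * q0 x + s * (sqrt (p x) - sqrt (q0 x))\<^sup>2 \<partial>\<mu>)"
    by (rule integral_cong_AE[rotated 2]) simp_all
  also have "\<dots> = 2 * (1 - s) + s * (\<integral>x. (sqrt (p x) - sqrt (q0 x))\<^sup>2 \<partial>\<mu>)"
    using assms m_integrable m_integral integrable_sqrt_diff_sq[of p \<mu> q0] by simp
  finally have "(\<integral>x. (sqrt (p x) - sqrt (m x))\<^sup>2 \<partial>\<mu>)
      = 2 * (1 - s) + s * (\<integral>x. (sqrt (p x) - sqrt (q0 x))\<^sup>2 \<partial>\<mu>)" .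
  moreover have "hellinger_sq (density \<mu> (\<lambda>x. ennreal (p x))) (density \<mu> (\<lambda>x. ennreal (m x)))
      = (\<integral>x. (sqrt (p x) - sqrt (m x))\<^sup>2 \<partial>\<mu>)"
    by (rule hellinger_sq_density) (simp_all add: assms m_nonneg m_integrable)
  moreover have "hellinger_sq (density \<mu> (\<lambda>x. ennreal (p x))) (density \<mu> (\<lambda>x. ennreal (q0 x)))
      = (\<integral>x. (sqrt (p x) - sqrt (q0 x))\<^sup>2 \<partial>\<mu>)"
    by (rule hellinger_sq_density) (simp_all add: assms)
  ultimately show ?thesis unfolding m_def[symmetric] s_def[symmetric] by (simp only:)
qed

lemma one_minus_sqrt_one_minus_bounds:
  fixes \<epsilon> :: real
  assumes "0 \<le> \<epsilon>" "\<epsilon> \<le> 1"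
  shows "1 - sqrt (1 - \<epsilon>) \<le> \<epsilon>" and "\<epsilon> \<le> 2 * (1 - sqrt (1 - \<epsilon>))"
proof -
  define s where "s = sqrt (1 - \<epsilon>)"
  have "0 \<le> s" "s \<le> 1" "\<epsilon> = (1 - s) * (1 + s)"
    using assms by (simp_all add: s_def algebra_simps flip: power2_eq_square)
  then show "1 - s \<le> \<epsilon>" "\<epsilon> \<le> 2 * (1 - s)"
    using mult_left_mono[of 1 "1 + s" "1 - s"] mult_left_mono[of "1 + s" 2 "1 - s"] by auto
qed

lemma contamination_ratio_bounds:
  fixes \<epsilon> h :: real
  assumes "0 \<le> \<epsilon>" "\<epsilon> \<le> 1" "0 \<le> h" "h \<le> 2" "max \<epsilon> h > 0"
  defines "H \<equiv> 2 * (1 - sqrt (1 - \<epsilon>)) + sqrt (1 - \<epsilon>) * h"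
  shows "1/4 \<le> H / max \<epsilon> h \<and> H / max \<epsilon> h \<le> 4"
proof -
  define s where "s = sqrt (1 - \<epsilon>)"
  have s: "0 \<le> s" "s \<le> 1" "1 - s \<le> \<epsilon>" "\<epsilon> \<le> 2 * (1 - s)"
    using assms one_minus_sqrt_one_minus_bounds[of \<epsilon>] by (simp_all add: s_def)
  have H: "H = 2 * (1 - s) + s * h" by (simp add: H_def s_def)
  have sh: "0 \<le> s * h" "s * h \<le> h" using s assms by (simp_all add: mult_left_le_one_le)
  have upper: "H \<le> 4 * max \<epsilon> h" using sh s(3) \<open>0 \<le> \<epsilon>\<close> unfolding H by (simp add: max_def)
  \<comment> \<open>Either s \<ge> 1/2 and h \<le> 2 s h, or 2 (1 - s) > 1 \<ge> h / 2.\<close>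
  have "h \<le> 2 * H"
  proof (cases "s \<ge> 1/2")
    case True
    then have "1 * h \<le> (2 * s) * h" using assms by (intro mult_right_mono) auto
    then show ?thesis using s(2) unfolding H by (simp add: mult.assoc)
  next
    case False
    then show ?thesis using sh(1) \<open>h \<le> 2\<close> unfolding H by (simp add: algebra_simps)
  qed
  moreover have "\<epsilon> \<le> H" using s sh unfolding H by linarith
  ultimately have lower: "max \<epsilon> h \<le> 4 * H" using \<open>0 \<le> h\<close> by simp
  show ?thesis using upper lower assms by (simp add: le_divide_eq divide_le_eq)
qed

theorem lemma7:
  fixes P Q0 Q1 :: "'a measure" and \<epsilon> :: real
  assumes "prob_space P" and "prob_space Q0" and "prob_space Q1"
    and "sets Q0 = sets P" and "sets Q1 = sets P"
    and "\<exists>A\<in>sets P. emeasure Q1 A = 1 \<and> emeasure P A = 0"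
    and "0 \<le> \<epsilon>" and "\<epsilon> \<le> 1"
  shows "(hellinger_sq P (mix_measure (ennreal (1 - \<epsilon>)) Q0 (ennreal \<epsilon>) Q1)
           = 2 * (1 - sqrt (1 - \<epsilon>)) + sqrt (1 - \<epsilon>) * hellinger_sq P Q0)
         \<and> (max \<epsilon> (hellinger_sq P Q0) > 0 \<longrightarrow>
           (1/4 \<le> hellinger_sq P (mix_measure (ennreal (1 - \<epsilon>)) Q0 (ennreal \<epsilon>) Q1)
                   / max \<epsilon> (hellinger_sq P Q0)
         \<and> hellinger_sq P (mix_measure (ennreal (1 - \<epsilon>)) Q0 (ennreal \<epsilon>) Q1)
                   / max \<epsilon> (hellinger_sq P Q0) \<le> 4))"
proof -
  obtain \<mu> p q0 q1 where sets_\<mu>: "sets \<mu> = sets P"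
    and p: "p \<in> borel_measurable \<mu>" "\<And>x. 0 \<le> p x" "integrable \<mu> p" "integral\<^sup>L \<mu> p = 1"
      "P = density \<mu> (\<lambda>x. ennreal (p x))"
    and q0: "q0 \<in> borel_measurable \<mu>" "\<And>x. 0 \<le> q0 x" "integrable \<mu> q0" "integral\<^sup>L \<mu> q0 = 1"
      "Q0 = density \<mu> (\<lambda>x. ennreal (q0 x))"
    and q1: "q1 \<in> borel_measurable \<mu>" "\<And>x. 0 \<le> q1 x" "integrable \<mu> q1" "integral\<^sup>L \<mu> q1 = 1"
      "Q1 = density \<mu> (\<lambda>x. ennreal (q1 x))"
    using prob_spaces_common_real_densities[OF assms(1-5)] by metis
  obtain A where A: "A \<in> sets P" "emeasure Q1 A = 1" "emeasure P A = 0" using assms(6) by blast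
  have "space Q1 = space \<mu>"
    using sets_eq_imp_space_eq[of Q1 \<mu>] assms(5) sets_\<mu> by simp
  then have "emeasure Q1 (space \<mu> - A) = 0"
    using A assms(5) emeasure_compl[of A Q1] prob_space.emeasure_space_1[OF assms(3)] by simp
  then have singular: "AE x in \<mu>. p x = 0 \<or> q1 x = 0"
    using A(1,3) p(1,2,5) q1(1,2,5) sets_\<mu>[symmetric]
    by (intro AE_singular_densities[of p \<mu> q1 A]) simp_all
  have mixture: "mix_measure (ennreal (1 - \<epsilon>)) Q0 (ennreal \<epsilon>) Q1
      = density \<mu> (\<lambda>x. ennreal ((1 - \<epsilon>) * q0 x + \<epsilon> * q1 x))"
    using q0 q1 assms(7,8) by (simp add: mix_measure_density_real)
  have identity: "hellinger_sq P (mix_measure (ennreal (1 - \<epsilon>)) Q0 (ennreal \<epsilon>) Q1)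
      = 2 * (1 - sqrt (1 - \<epsilon>)) + sqrt (1 - \<epsilon>) * hellinger_sq P Q0"
    unfolding mixture unfolding p(5) q0(5)
    by (rule hellinger_sq_density_contamination) (use p q0 q1 singular assms(7,8) in auto)
  have "0 \<le> hellinger_sq P Q0" by (simp add: hellinger_sq_def Let_def)
  moreover have "hellinger_sq P Q0 \<le> 2"
    unfolding p(5) q0(5) using hellinger_sq_density_le[OF p(1) q0(1)] p(2-4) q0(2-4) by simp
  ultimately show ?thesis
    unfolding identity using contamination_ratio_bounds[OF assms(7,8)] by blast
qed

end
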